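(* For $s\in\mathbb{D}^+_{21/4}$ let $r_1(s),r_2(s),r_3(s)$ be the roots of $P_s(u)=u^3/3+u^2+s$ labeled as described in the context. Then: (i) For all $s\in\mathbb{D}^+_{21/4}$ we have $r_3(s),r_1(s)\in\mathbb{D}^-_5$ and $r_2(s)\in\mathbb{D}^+_5$. (ii) Let $\hat{\mathcal{C}}_0$ be the polygon with vertices $-1,\,-1-6i,\,6-6i,\,6+6i,\,-6+6i,\,-6,\,-1$, oriented anticlockwise. Then for $s\in\mathbb{D}^+_{21/4}$, $r_2(s),r_3(s)$ lie in the interior of $\hat{\mathcal{C}}_0$ while $r_1(s)$ lies in its exterior. (iii) For all $s\in\mathbb{D}^+_{21/4}$ the closed path $\mathcal{C}$ (defined in the context) encloses $r_1(s)$ and $r_3(s)$ and leaves $r_2(s)$ outside. Moreover $$\alpha:=\sup_{u\in\mathcal{C},\ s\in\mathbb{D}^+_{21/4}}|J(u,s)|<\infty,\qquad J(u,s)=\int_{u_0}^u R(v,s)\,dv,$$ where the integral is taken along $\mathcal{C}$.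
   Context: $\mathbb{H}$ is the open upper half plane; $\mathbb{D}^+_\rho=\{s\in\mathbb{H}:|s|<\rho\}$ and $\mathbb{D}^-_\rho=\{s\in-\mathbb{H}:|s|<\rho\}$. For $s\in\mathbb{H}$ the polynomial $P_s$ has distinct roots, exactly one of which, $r_2(s)$, lies in $\mathbb{H}$; the other two lie in the lower half plane, $r_1(s)$ having real part $<-2$ and $r_3(s)$ having positive real part. The path $\mathcal{C}$ consists of the polygonal line connecting successively $6,\ \frac{1+i}{3},\ -(1+i),\ -2+\frac{-1+i}{3},\ -3+\frac{i}{3},\ u_0,\ -6$, with $u_0=-4$, closed by the semicircle of radius $6$ centered at the origin in the lower half plane. $R(v,s)=\sqrt{v^3/3+v^2+s}$, taken as a continuous branch along $\mathcal{C}$ starting at $u_0$. *)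

theory Defs
  imports "HOL-Complex_Analysis.Complex_Analysis"
begin

definition Pcub :: "complex \<Rightarrow> complex \<Rightarrow> complex" where
  "Pcub s u = u ^ 3 / 3 + u ^ 2 + s"

definition Dplus :: "real \<Rightarrow> complex set" where
  "Dplus \<rho> = {s. Im s > 0 \<and> cmod s < \<rho>}"

definition Dminus :: "real \<Rightarrow> complex set" where
  "Dminus \<rho> = {s. Im s < 0 \<and> cmod s < \<rho>}"

definition r1 :: "complex \<Rightarrow> complex" where
  "r1 s = (THE u. Pcub s u = 0 \<and> Im u < 0 \<and> Re u < -2)"

definition r2 :: "complex \<Rightarrow> complex" where
  "r2 s = (THE u. Pcub s u = 0 \<and> Im u > 0)"

definition r3 :: "complex \<Rightarrow> complex" where
  "r3 s = (THE u. Pcub s u = 0 \<and> Im u < 0 \<and> Re u > 0)"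

definition C0hat :: "real \<Rightarrow> complex" where
  "C0hat = linepath (-1) (-1 - 6*\<i>) +++ linepath (-1 - 6*\<i>) (6 - 6*\<i>) +++
           linepath (6 - 6*\<i>) (6 + 6*\<i>) +++ linepath (6 + 6*\<i>) (-6 + 6*\<i>) +++
           linepath (-6 + 6*\<i>) (-6) +++ linepath (-6) (-1)"

definition u0 :: complex where "u0 = -4"

definition Cpath :: "real \<Rightarrow> complex" where
  "Cpath = linepath u0 (-6) +++ part_circlepath 0 6 pi (2*pi) +++
           linepath 6 ((1 + \<i>)/3) +++ linepath ((1 + \<i>)/3) (-(1 + \<i>)) +++
           linepath (-(1 + \<i>)) (-2 + (-1 + \<i>)/3) +++
           linepath (-2 + (-1 + \<i>)/3) (-3 + \<i>/3) +++
           linepath (-3 + \<i>/3) u0"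

text \<open>A continuous branch of R(v,s) = sqrt(v^3/3+v^2+s) along C (as a function of the
  path parameter).\<close>
definition is_branch :: "complex \<Rightarrow> (real \<Rightarrow> complex) \<Rightarrow> bool" where
  "is_branch s \<rho> \<longleftrightarrow> continuous_on {0..1} \<rho> \<and>
     (\<forall>t\<in>{0..1}. (\<rho> t)^2 = Pcub s (Cpath t))"

text \<open>J(u,s) = integral of R(v,s) dv along C from u0 to u = Cpath t.\<close>
definition Jint :: "(real \<Rightarrow> complex) \<Rightarrow> real \<Rightarrow> complex" where
  "Jint \<rho> t = integral {0..t} (\<lambda>\<tau>. \<rho> \<tau> * vector_derivative Cpath (at \<tau> within {0..1}))"

end

theory Submission
  imports Defs
begin

text \<open>
  Substituting \<open>u = P - 1\<close> turns \<open>P\<^sub>s\<close> into the depressed cubic \<open>P\<^sup>3/3 - P + s + 2/3\<close>, and taking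
  imaginary parts of \<open>P\<^sub>s(u) = 0\<close> gives \<open>Im u ((Re u + 1)\<^sup>2 - 1 - (Im u)\<^sup>2/3) = -Im s < 0\<close>: roots in
  the upper half plane lie inside the hyperbola \<open>(Re u + 1)\<^sup>2 = 1 + (Im u)\<^sup>2/3\<close>, roots in the lower
  half plane outside it. Two distinct roots \<open>P, Q\<close> of the depressed cubic satisfy
  \<open>P\<^sup>2 + PQ + Q\<^sup>2 = 3\<close>, and \<open>-P-Q\<close> is the third one; from this each of the regions
  \<open>Im u > 0\<close>, \<open>Re u < -2\<close>, \<open>Re u > 0\<close> contains at most one root, so the three distinct roots fill
  them. The bound \<open>|u| < 5\<close> comes from \<open>|u|\<^sup>2 |u/3 + 1| = |s|\<close>.

  For the paths, the roots are placed in explicit regions: a connected region that the path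
  avoids and winds around once (the winding number is computed with logarithmic primitives of
  \<open>1/(w - z)\<close>) lies inside it, and a point from which a vertical ray misses the path lies
  outside. Since \<open>P\<^sub>s\<close> has no zero on \<open>\<C>\<close>, a continuous square root along \<open>\<C>\<close> exists; it is
  bounded by 11, and \<open>\<C>\<close> has bounded speed, which bounds \<open>J\<close>.
\<close>

section \<open>The roots of the cubic\<close>
lemma Pcub_eq_0_iff: "Pcub s u = 0 \<longleftrightarrow> (u + 1)^3/3 - (u + 1) = -(s + 2/3)"
proof -
  have "Pcub s u = ((u + 1)^3/3 - (u + 1)) + (s + 2/3)"
    unfolding Pcub_def by (simp add: power3_eq_cube power2_eq_square field_simps)
  then show ?thesis by (auto simp: algebra_simps)
qed

lemma Im_Pcub: "Im (Pcub s u) = Im u * ((Re u + 1)^2 - 1 - (Im u)^2/3) + Im s"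
  unfolding Pcub_def by (simp add: power3_eq_cube power2_eq_square field_simps)

lemma Pcub_root_Im_balance:
  assumes "Pcub s u = 0"
  shows "Im u * ((Re u + 1)^2 - 1 - (Im u)^2/3) = - Im s"
  using arg_cong[OF assms, of Im] by (simp add: Im_Pcub)

lemma Pcub_root_upper:
  assumes "Pcub s u = 0" "Im s > 0" "Im u > 0"
  shows "(Re u + 1)^2 < 1 + (Im u)^2/3"
proof -
  have "Im u * ((Re u + 1)^2 - 1 - (Im u)^2/3) < 0"
    using Pcub_root_Im_balance[OF assms(1)] assms(2) by simp
  then show ?thesis using assms(3) by (simp add: mult_less_0_iff)
qed

lemma Pcub_root_lower:
  assumes "Pcub s u = 0" "Im s > 0" "Im u < 0"
  shows "(Re u + 1)^2 > 1 + (Im u)^2/3"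
proof -
  have "Im u * ((Re u + 1)^2 - 1 - (Im u)^2/3) < 0"
    using Pcub_root_Im_balance[OF assms(1)] assms(2) by simp
  then show ?thesis using assms(3) by (simp add: mult_less_0_iff)
qed

lemma Pcub_root_not_real:
  assumes "Pcub s u = 0" "Im s > 0"
  shows "Im u \<noteq> 0"
  using Pcub_root_Im_balance[OF assms(1)] assms(2) by auto

lemma Pcub_root_lower_Re:
  assumes "Pcub s u = 0" "Im s > 0" "Im u < 0"
  shows "Re u > 0 \<or> Re u < -2"
proof -
  have "1 < (Re u + 1)^2"
    using Pcub_root_lower[OF assms] zero_le_power2[of "Im u"] by linarith
  then have "1 < \<bar>Re u + 1\<bar>"
    by (metis abs_le_square_iff abs_one not_le one_power2)
  then show ?thesis by linarith
qed

lemma norm_Pcub_root_less: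
  assumes "Pcub s u = 0" "cmod s < 50/3"
  shows "cmod u < 5"
proof (rule ccontr)
  assume "\<not> cmod u < 5"
  then have u: "5 \<le> cmod u" by simp
  have "u^2 * (u/3 + 1) = -s"
    using assms(1) unfolding Pcub_def by (simp add: algebra_simps power3_eq_cube power2_eq_square add_eq_0_iff)
  then have "cmod s = (cmod u)^2 * cmod (u/3 + 1)"
    by (metis norm_minus_cancel norm_mult norm_power)
  moreover have "2/3 \<le> cmod (u/3 + 1)"
    using norm_triangle_ineq2[of "u/3" "-1"] u by simp
  moreover have "5^2 \<le> (cmod u)^2"
    using u by (intro power_mono) auto
  ultimately have "5^2 * (2/3) \<le> cmod s"
    by (metis mult_mono zero_le_numeral zero_le_power2 divide_nonneg_nonneg)
  then show False using assms(2) by simp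
qed

lemma depressed_cubic_two_roots:
  fixes P Q :: complex
  assumes "P^3/3 - P = Q^3/3 - Q" "P \<noteq> Q"
  shows "P^2 + P*Q + Q^2 = 3"
proof -
  have "(P - Q) * (P^2 + P*Q + Q^2 - 3) = 0"
    using assms(1) by (simp add: field_simps power3_eq_cube power2_eq_square) algebra
  then show ?thesis using assms(2) by simp
qed

text \<open>Cardano: with \<open>t + 1/t = 3c\<close> and \<open>A\<^sup>3 = t\<close>, the number \<open>A + 1/A\<close> solves \<open>P\<^sup>3/3 - P = c\<close>.\<close>
lemma depressed_cubic_solvable:
  fixes c :: complex
  shows "\<exists>P. P^3/3 - P = c"
proof -
  define t where "t = (3*c + csqrt (9*c^2 - 4))/2"
  have t: "t^2 - 3*c*t + 1 = 0" unfolding t_def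
    by (simp add: power2_eq_square field_simps) (simp add: power2_eq_square[symmetric] algebra_simps)
  then have "t \<noteq> 0" by auto
  define A where "A = exp (Ln t / 3)"
  have "A^3 = t" "A \<noteq> 0"
    unfolding A_def using exp_of_nat_mult[of 3 "Ln t / 3"] \<open>t \<noteq> 0\<close> by simp_all
  have "(A + 1/A)^3/3 - (A + 1/A) = (A^3 + 1/A^3)/3"
    using \<open>A \<noteq> 0\<close> by (simp add: field_simps power3_eq_cube)
  also have "\<dots> = c"
    using t \<open>t \<noteq> 0\<close> unfolding \<open>A^3 = t\<close> by (simp add: field_simps power2_eq_square)
  finally show ?thesis by blast
qed

lemma Im_eq_0_if_square_pos_real:
  fixes P :: complex
  assumes "P^2 = of_real r" "r > 0"
  shows "Im P = 0"
proof (rule ccontr)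
  assume "Im P \<noteq> 0"
  have "(Re P)^2 - (Im P)^2 = r" "Re P * Im P = 0"
    using arg_cong[OF assms(1), of Re] arg_cong[OF assms(1), of Im] by (auto simp: power2_eq_square)
  then have "(Im P)^2 = -r" using \<open>Im P \<noteq> 0\<close> by simp
  then show False using assms(2) zero_le_power2[of "Im P"] by linarith
qed

text \<open>The critical values of \<open>P\<^sup>3/3 - P\<close> are \<open>\<plusminus>2/3\<close>, so for non-real \<open>c\<close> the cubic has simple roots.\<close>
lemma depressed_cubic_three_roots:
  fixes c :: complex
  assumes "Im c \<noteq> 0"
  obtains P Q R where "P^3/3 - P = c" "Q^3/3 - Q = c" "R^3/3 - R = c"
    "P \<noteq> Q" "P \<noteq> R" "Q \<noteq> R"
proof -
  obtain P where P: "P^3/3 - P = c" using depressed_cubic_solvable by blast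
  have c: "c = P * (P^2/3 - 1)" using P by (simp add: field_simps power3_eq_cube power2_eq_square)
  have other_root: "X^3/3 - X = c" "X \<noteq> P" if "X^2 + P*X + P^2 = 3" for X
  proof -
    have "(X^3/3 - X) - (P^3/3 - P) = (X - P) * (X^2 + P*X + P^2 - 3)/3"
      by (simp add: field_simps power3_eq_cube power2_eq_square)
    then show "X^3/3 - X = c" using that P by simp
    show "X \<noteq> P"
    proof
      assume "X = P"
      then have "P^2 = of_real 1" using that by (simp add: power2_eq_square)
      then have "Im P = 0" "c = -(2/3) * P"
        using c by (auto intro: Im_eq_0_if_square_pos_real simp: field_simps)
      then show False using assms by simp
    qed
  qed
  define d where "d = csqrt (12 - 3*P^2)"
  have d: "d^2 = 12 - 3*P^2" unfolding d_def by simp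
  define Q R where "Q = (-P + d)/2" and "R = (-P - d)/2"
  have "Q^2 + P*Q + P^2 = (3*P^2 + d^2)/4" "R^2 + P*R + P^2 = (3*P^2 + d^2)/4"
    unfolding Q_def R_def by (simp_all add: field_simps power2_eq_square)
  then have "Q^2 + P*Q + P^2 = 3" "R^2 + P*R + P^2 = 3"
    unfolding d by simp_all
  note QR = other_root[OF this(1)] other_root[OF this(2)]
  have "Q \<noteq> R"
  proof
    assume "Q = R"
    then have "P^2 = of_real 4" using d unfolding Q_def R_def by simp
    then have "Im P = 0" "c = P/3"
      by (rule Im_eq_0_if_square_pos_real, simp) (use c \<open>P^2 = of_real 4\<close> in \<open>simp add: field_simps\<close>)
    then show False using assms by (simp add: \<open>c = P/3\<close>)
  qed
  with P QR that show ?thesis by metis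
qed

lemma depressed_cubic_partner_below:
  fixes P Q :: complex
  assumes "P^2 + P*Q + Q^2 = 3" "Im P > 0" "(Re P)^2 < 1 + (Im P)^2/3"
  shows "Im Q < 0"
proof -
  define w where "w = 2*Q + P"
  have "w^2 = 4*(P^2 + P*Q + Q^2) - 3*P^2"
    unfolding w_def by (simp add: power2_eq_square algebra_simps)
  then have "w^2 = 12 - 3*P^2" using assms(1) by simp
  then have X: "(Re w)^2 - (Im w)^2 = 12 - 3*((Re P)^2 - (Im P)^2)"
    and XY: "Re w * Im w = -3 * Re P * Im P"
    using arg_cong[OF \<open>w^2 = 12 - 3*P^2\<close>, of Re] arg_cong[OF \<open>w^2 = 12 - 3*P^2\<close>, of Im]
    by (simp_all add: power2_eq_square algebra_simps)
  have "(Im w)^2 < (Im P)^2"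
  proof (rule ccontr)
    assume "\<not> (Im w)^2 < (Im P)^2"
    define k where "k = 12 - 3*(Re P)^2 + 3*(Im P)^2"
    have "0 < k" using assms(3) zero_le_power2[of "Im P"] unfolding k_def by linarith
    have "(Re w)^2 = k + (Im w)^2" using X unfolding k_def by simp
    then have "(Re w * Im w)^2 = (k + (Im w)^2) * (Im w)^2" by (simp add: power_mult_distrib)
    also have "\<dots> \<ge> (k + (Im P)^2) * (Im P)^2"
      using \<open>\<not> (Im w)^2 < (Im P)^2\<close> \<open>0 < k\<close> by (intro mult_mono) auto
    finally have "(k + (Im P)^2) * (Im P)^2 \<le> 9 * (Re P)^2 * (Im P)^2"
      using XY by (simp add: power_mult_distrib)
    moreover have "9 * (Re P)^2 * (Im P)^2 < (k + (Im P)^2) * (Im P)^2"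
      using assms(2,3) unfolding k_def by (intro mult_strict_right_mono) auto
    ultimately show False by simp
  qed
  then have "Im w < Im P"
    using power_less_imp_less_base[of "Im w" 2 "Im P"] assms(2) by simp
  then show ?thesis unfolding w_def by simp
qed

lemma sum_beyond_hyperbola:
  fixes a1 a2 b1 b2 :: real
  assumes "0 \<le> b1 * b2" "1 + b1^2/3 < a1^2" "1 + b2^2/3 < a2^2" "0 < a1 * a2"
  shows "4 + (b1 + b2)^2/3 < (a1 + a2)^2"
proof -
  have "(1 + b1*b2/3)^2 \<le> (1 + b1^2/3) * (1 + b2^2/3)"
  proof -
    have "(1 + b1^2/3) * (1 + b2^2/3) - (1 + b1*b2/3)^2 = (b1 - b2)^2/3"
      by (simp add: power2_eq_square field_simps)
    then show ?thesis using zero_le_power2[of "b1 - b2"] by linarith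
  qed
  also have "\<dots> < (a1 * a2)^2"
    using assms(2,3) by (simp add: power_mult_distrib mult_strict_mono')
  finally have "1 + b1*b2/3 < a1 * a2"
    using power_less_imp_less_base[of "1 + b1*b2/3" 2 "a1*a2"] assms(4) by simp
  then show ?thesis
    using assms(2,3) by (simp add: power2_eq_square field_simps)
qed

lemma Pcub_upper_root_unique:
  assumes "Im s > 0" "Pcub s u = 0" "Pcub s v = 0" "Im u > 0" "Im v > 0"
  shows "u = v"
proof (rule ccontr)
  assume "u \<noteq> v"
  have "(u + 1)^2 + (u + 1)*(v + 1) + (v + 1)^2 = 3"
    using assms(2,3) \<open>u \<noteq> v\<close> unfolding Pcub_eq_0_iff by (intro depressed_cubic_two_roots) auto
  then have "Im (v + 1) < 0"
    using Pcub_root_upper[OF assms(2,1,4)] assms(4)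
    by (intro depressed_cubic_partner_below[of "u + 1" "v + 1"]) auto
  then show False using assms(5) by simp
qed

text \<open>Two distinct roots \<open>u, v\<close> in the lower half plane force the third root \<open>-u-v-2\<close> into the
  upper one; if \<open>u, v\<close> lie on the same side of \<open>Re = -1\<close>, it is then too far from that line.\<close>
lemma Pcub_lower_root_unique:
  assumes "Im s > 0" "Pcub s u = 0" "Pcub s v = 0" "Im u < 0" "Im v < 0"
    "0 < (Re u + 1) * (Re v + 1)"
  shows "u = v"
proof (rule ccontr)
  assume "u \<noteq> v"
  define P Q where "P = u + 1" and "Q = v + 1"
  have "P^3/3 - P = Q^3/3 - Q" "P^3/3 - P = -(s + 2/3)"
    using assms(2,3) unfolding Pcub_eq_0_iff P_def Q_def by simp_all
  then have PQ: "P^2 + P*Q + Q^2 = 3"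
    using \<open>u \<noteq> v\<close> unfolding P_def Q_def by (intro depressed_cubic_two_roots) auto
  define W where "W = -(P + Q)"
  have "W^3/3 - W - (P^3/3 - P) = (3 - (P^2 + P*Q + Q^2)) * (2*P + Q)/3"
    unfolding W_def by (simp add: field_simps power3_eq_cube power2_eq_square)
  then have "Pcub s (W - 1) = 0"
    using PQ \<open>P^3/3 - P = -(s + 2/3)\<close> unfolding Pcub_eq_0_iff by simp
  moreover have "Im (W - 1) > 0"
    using assms(4,5) unfolding W_def P_def Q_def by simp
  ultimately have "(Re (W - 1) + 1)^2 < 1 + (Im (W - 1))^2/3"
    using Pcub_root_upper assms(1) by blast
  then have "(Re P + Re Q)^2 < 1 + (Im P + Im Q)^2/3"
    unfolding W_def by (simp add: power2_eq_square algebra_simps)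
  moreover have "4 + (Im P + Im Q)^2/3 < (Re P + Re Q)^2"
    using Pcub_root_lower[OF assms(2,1,4)] Pcub_root_lower[OF assms(3,1,5)] assms(4-6)
    unfolding P_def Q_def by (intro sum_beyond_hyperbola) (auto simp: zero_le_mult_iff)
  ultimately show False by simp
qed

lemma Pcub_root_cases:
  assumes "Pcub s u = 0" "Im s > 0"
  shows "Im u > 0 \<or> (Im u < 0 \<and> Re u < -2) \<or> (Im u < 0 \<and> Re u > 0)"
  using Pcub_root_not_real[OF assms] Pcub_root_lower_Re[OF assms] by linarith

lemma Pcub_lower_left_root_unique:
  "\<lbrakk>Im s > 0; Pcub s u = 0; Pcub s v = 0; Im u < 0; Im v < 0; Re u < -2; Re v < -2\<rbrakk> \<Longrightarrow> u = v"
  by (rule Pcub_lower_root_unique) (auto intro: mult_neg_neg)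

lemma Pcub_lower_right_root_unique:
  "\<lbrakk>Im s > 0; Pcub s u = 0; Pcub s v = 0; Im u < 0; Im v < 0; Re u > 0; Re v > 0\<rbrakk> \<Longrightarrow> u = v"
  by (rule Pcub_lower_root_unique) (auto intro: mult_pos_pos)

text \<open>Pigeonhole: three distinct roots, three classes, at most one root in each class.\<close>
lemma Pcub_roots_exist:
  assumes "Im s > 0"
  shows "\<exists>u. Pcub s u = 0 \<and> Im u > 0"
    and "\<exists>u. Pcub s u = 0 \<and> Im u < 0 \<and> Re u < -2"
    and "\<exists>u. Pcub s u = 0 \<and> Im u < 0 \<and> Re u > 0"
proof -
  obtain P Q R where PQR: "P^3/3 - P = -(s + 2/3)" "Q^3/3 - Q = -(s + 2/3)" "R^3/3 - R = -(s + 2/3)"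
    "P \<noteq> Q" "P \<noteq> R" "Q \<noteq> R"
    using depressed_cubic_three_roots[of "-(s + 2/3)"] assms by auto
  define roots where "roots = {P - 1, Q - 1, R - 1}"
  have root: "Pcub s u = 0" if "u \<in> roots" for u
    using that PQR(1-3) unfolding roots_def Pcub_eq_0_iff by auto
  note cases = Pcub_root_cases[OF root assms]
  define cls :: "complex \<Rightarrow> nat" where
    "cls u = (if Im u > 0 then 0 else if Re u < -2 then 1 else 2)" for u
  have "u = v" if u: "u \<in> roots" and v: "v \<in> roots" and "cls u = cls v" for u v
    using cases[OF u] cases[OF v] \<open>cls u = cls v\<close> unfolding cls_def
    using Pcub_upper_root_unique[OF assms root[OF u] root[OF v]]
      Pcub_lower_left_root_unique[OF assms root[OF u] root[OF v]]
      Pcub_lower_right_root_unique[OF assms root[OF u] root[OF v]]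
    by (auto split: if_splits)
  then have "inj_on cls roots" by (intro inj_onI)
  moreover have "card roots = 3" using PQR(4-6) unfolding roots_def by simp
  ultimately have "card (cls ` roots) = 3" by (simp add: card_image)
  moreover have "cls ` roots \<subseteq> {0, 1, 2}" unfolding cls_def by auto
  ultimately have "cls ` roots = {0, 1, 2}" by (intro card_subset_eq) auto
  then obtain u1 u2 u3 where u: "u1 \<in> roots" "cls u1 = 0" "u2 \<in> roots" "cls u2 = 1"
    "u3 \<in> roots" "cls u3 = 2"
    by (metis (no_types, lifting) image_iff insertCI)
  show "\<exists>u. Pcub s u = 0 \<and> Im u > 0"
    using u(1,2) root unfolding cls_def by (auto split: if_splits)
  show "\<exists>u. Pcub s u = 0 \<and> Im u < 0 \<and> Re u < -2"
    using u(3,4) root cases[OF u(3)] unfolding cls_def by (auto split: if_splits)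
  show "\<exists>u. Pcub s u = 0 \<and> Im u < 0 \<and> Re u > 0"
    using u(5,6) root cases[OF u(5)] unfolding cls_def by (auto split: if_splits)
qed

lemma r1_spec: "Im s > 0 \<Longrightarrow> Pcub s (r1 s) = 0 \<and> Im (r1 s) < 0 \<and> Re (r1 s) < -2"
  unfolding r1_def
  by (rule theI'[OF ex_ex1I], rule Pcub_roots_exist(2)) (use Pcub_lower_left_root_unique in blast)+

lemma r2_spec: "Im s > 0 \<Longrightarrow> Pcub s (r2 s) = 0 \<and> Im (r2 s) > 0"
  unfolding r2_def
  by (rule theI'[OF ex_ex1I], rule Pcub_roots_exist(1)) (use Pcub_upper_root_unique in blast)+

lemma r3_spec: "Im s > 0 \<Longrightarrow> Pcub s (r3 s) = 0 \<and> Im (r3 s) < 0 \<and> Re (r3 s) > 0"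
  unfolding r3_def
  by (rule theI'[OF ex_ex1I], rule Pcub_roots_exist(3)) (use Pcub_lower_right_root_unique in blast)+

section \<open>Regions avoided by the paths\<close>

lemma closed_segment_disjointI:
  assumes "\<And>u. 0 \<le> u \<Longrightarrow> u \<le> 1 \<Longrightarrow>
    Complex (Re a + u * (Re b - Re a)) (Im a + u * (Im b - Im a)) \<notin> X"
  shows "closed_segment a b \<inter> X = {}"
proof -
  have "(1 - u) *\<^sub>R a + u *\<^sub>R b = Complex (Re a + u * (Re b - Re a)) (Im a + u * (Im b - Im a))" for u
    by (simp add: complex_eq_iff algebra_simps)
  then show ?thesis
    using assms unfolding closed_segment_def by auto
qed

lemma convex_halfplane_Re_Im: "convex {w. a * Re w + b * Im w < c}"
  using convex_halfspace_lt[of "Complex a b" c] by (simp add: inner_complex_def)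

lemma part_circlepath_lower_half:
  assumes "w \<in> path_image (part_circlepath 0 r pi (2*pi))" "r \<ge> 0"
  shows "cmod w = r" "Im w \<le> 0"
proof -
  obtain x where x: "x \<in> closed_segment pi (2*pi)" "w = r * cis x"
    using assms(1) unfolding path_image_part_circlepath' by auto
  then have "pi \<le> x" "x \<le> 2*pi" by (auto simp: closed_segment_eq_real_ivl)
  then have "sin (x - pi) \<ge> 0" by (intro sin_ge_zero) auto
  then have "sin x \<le> 0" by (simp add: sin_diff)
  then show "Im w \<le> 0" using x(2) assms(2) by (simp add: mult_nonneg_nonpos)
  show "cmod w = r" using x(2) assms(2) by (simp add: norm_mult)
qed

lemma part_circlepath_lower_ends:
  "pathstart (part_circlepath 0 r pi (2*pi)) = -r" "pathfinish (part_circlepath 0 r pi (2*pi)) = r"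
proof -
  have "exp (\<i> * (2 * complex_of_real pi)) = 1"
    by (metis exp_two_pi_i mult.commute mult.left_commute)
  then show "pathstart (part_circlepath 0 r pi (2*pi)) = -r" "pathfinish (part_circlepath 0 r pi (2*pi)) = r"
    by simp_all
qed

lemma path_image_Cpath:
  "path_image Cpath = closed_segment u0 (-6) \<union> path_image (part_circlepath 0 6 pi (2*pi)) \<union>
     closed_segment 6 ((1 + \<i>)/3) \<union> closed_segment ((1 + \<i>)/3) (-(1 + \<i>)) \<union>
     closed_segment (-(1 + \<i>)) (-2 + (-1 + \<i>)/3) \<union> closed_segment (-2 + (-1 + \<i>)/3) (-3 + \<i>/3) \<union>
     closed_segment (-3 + \<i>/3) u0"
  unfolding Cpath_def
  by (simp add: path_image_join Un_assoc part_circlepath_lower_ends del: pathfinish_part_circlepath pathstart_part_circlepath)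

lemma Cpath_closed_valid: "valid_path Cpath" "path Cpath" "pathfinish Cpath = pathstart Cpath"
  unfolding Cpath_def
  by (simp_all add: valid_path_imp_path part_circlepath_lower_ends del: pathfinish_part_circlepath pathstart_part_circlepath)

lemma path_image_C0hat:
  "path_image C0hat = closed_segment (-1) (-1 - 6*\<i>) \<union> closed_segment (-1 - 6*\<i>) (6 - 6*\<i>) \<union>
     closed_segment (6 - 6*\<i>) (6 + 6*\<i>) \<union> closed_segment (6 + 6*\<i>) (-6 + 6*\<i>) \<union>
     closed_segment (-6 + 6*\<i>) (-6) \<union> closed_segment (-6) (-1)"
  unfolding C0hat_def by (simp add: path_image_join Un_assoc)

lemma C0hat_closed_valid: "valid_path C0hat" "path C0hat" "pathfinish C0hat = pathstart C0hat"
  unfolding C0hat_def by (simp_all add: valid_path_imp_path)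

text \<open>\<open>upper_cone\<close> is \<open>|Re w + 1| < 1 + Im w, Im w > 0\<close>: it contains the hyperbolic region of the
  upper roots, and its edges run along the segments of \<open>\<C>\<close> through \<open>-1-\<i>\<close>.\<close>
definition upper_cone :: "complex set" where
  "upper_cone = {w. 0 < Im w \<and> Re w < Im w \<and> - Re w - 2 < Im w}"

definition lower_zone :: "complex set" where
  "lower_zone = ball 0 6 \<inter> {w. Im w < 0 \<and> (Im w < Re w \<or> Im w < - Re w - 2)}"

definition C0hat_zone :: "complex set" where
  "C0hat_zone = {w. \<bar>Re w\<bar> < 6 \<and> \<bar>Im w\<bar> < 6 \<and> (-1 < Re w \<or> 0 < Im w)}"

definition lower_left_strip :: "complex set" where
  "lower_left_strip = {w. -6 < Re w \<and> Re w < -1 \<and> Im w < 0}"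

lemma Pcub_upper_root_in_upper_cone:
  assumes "Pcub s u = 0" "Im s > 0" "Im u > 0"
  shows "u \<in> upper_cone"
proof -
  have "1 + (Im u)^2/3 < (1 + Im u)^2"
    using assms(3) by (simp add: power2_sum add_nonneg_pos)
  then have "(Re u + 1)^2 < (1 + Im u)^2"
    using Pcub_root_upper[OF assms] by linarith
  then have "\<bar>Re u + 1\<bar> < 1 + Im u"
    using assms(3) power2_less_imp_less[of "\<bar>Re u + 1\<bar>" "1 + Im u"] by simp
  then show ?thesis using assms(3) unfolding upper_cone_def by auto
qed

lemma Pcub_lower_root_in_lower_zone:
  assumes "Pcub s u = 0" "Im s > 0" "cmod s < 50/3" "Im u < 0"
  shows "u \<in> lower_zone"
  using norm_Pcub_root_less[OF assms(1,3)] Pcub_root_lower_Re[OF assms(1,2,4)] assms(4)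
  unfolding lower_zone_def by auto

lemma connected_Un_convex:
  fixes A B :: "'a::real_normed_vector set"
  assumes "convex A" "convex B" "z \<in> A" "z \<in> B"
  shows "connected (A \<union> B)"
  using connected_Un[OF convex_connected[OF assms(1)] convex_connected[OF assms(2)]] assms(3,4) by blast

lemma connected_lower_zone: "connected lower_zone"
proof -
  define H where "H = ball 0 6 \<inter> {w. Im w < 0}"
  have "convex H" unfolding H_def by (intro convex_Int convex_ball convex_halfspace_Im_lt)
  then have "connected ((H \<inter> {w. (-1) * Re w + 1 * Im w < 0}) \<union> (H \<inter> {w. 1 * Re w + 1 * Im w < -2}))"
    by (intro connected_Un_convex[where z = "-3 * \<i>"] convex_Int convex_halfplane_Re_Im)
      (auto simp: H_def)
  moreover have "lower_zone = (H \<inter> {w. (-1) * Re w + 1 * Im w < 0}) \<union> (H \<inter> {w. 1 * Re w + 1 * Im w < -2})"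
    unfolding lower_zone_def H_def by auto
  ultimately show ?thesis by simp
qed

lemma connected_C0hat_zone: "connected C0hat_zone"
proof -
  define H where "H = {w. Re w < 6} \<inter> {w. Re w > -6} \<inter> {w. Im w < 6} \<inter> {w. Im w > -6}"
  have "convex H"
    unfolding H_def by (intro convex_Int convex_halfspace_Re_lt convex_halfspace_Re_gt
        convex_halfspace_Im_lt convex_halfspace_Im_gt)
  then have "connected ((H \<inter> {w. Re w > -1}) \<union> (H \<inter> {w. Im w > 0}))"
    by (intro connected_Un_convex[where z = "2 + \<i>"] convex_Int convex_halfspace_Re_gt
        convex_halfspace_Im_gt) (auto simp: H_def)
  moreover have "C0hat_zone = (H \<inter> {w. Re w > -1}) \<union> (H \<inter> {w. Im w > 0})"
    unfolding C0hat_zone_def H_def by auto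
  ultimately show ?thesis by simp
qed

lemma Cpath_avoids_root_zones: "path_image Cpath \<inter> (upper_cone \<union> lower_zone) = {}"
proof -
  define X where "X = upper_cone \<union> {w. Im w < 0 \<and> (Im w < Re w \<or> Im w < - Re w - 2)}"
  have "closed_segment u0 (-6) \<inter> X = {}" "closed_segment 6 ((1 + \<i>)/3) \<inter> X = {}"
    "closed_segment ((1 + \<i>)/3) (-(1 + \<i>)) \<inter> X = {}"
    "closed_segment (-(1 + \<i>)) (-2 + (-1 + \<i>)/3) \<inter> X = {}"
    "closed_segment (-2 + (-1 + \<i>)/3) (-3 + \<i>/3) \<inter> X = {}"
    "closed_segment (-3 + \<i>/3) u0 \<inter> X = {}"
    unfolding X_def upper_cone_def u0_def by (auto intro!: closed_segment_disjointI)
  moreover have "upper_cone \<union> lower_zone \<subseteq> X"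
    unfolding X_def lower_zone_def by blast
  moreover have "path_image (part_circlepath 0 6 pi (2*pi)) \<inter> (upper_cone \<union> lower_zone) = {}"
    using part_circlepath_lower_half[of _ 6] unfolding upper_cone_def lower_zone_def by fastforce
  ultimately show ?thesis
    unfolding path_image_Cpath by blast
qed

lemma C0hat_avoids_zones: "path_image C0hat \<inter> (C0hat_zone \<union> lower_left_strip) = {}"
  unfolding path_image_C0hat Int_Un_distrib2 Un_empty
  by (intro conjI closed_segment_disjointI) (auto simp: C0hat_zone_def lower_left_strip_def)

section \<open>Winding numbers, inside and outside\<close>

lemma subset_inside_if_winding_number_nonzero:
  assumes "path \<gamma>" "pathfinish \<gamma> = pathstart \<gamma>" "connected S" "S \<inter> path_image \<gamma> = {}"
    "z \<in> S" "winding_number \<gamma> z \<noteq> 0"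
  shows "S \<subseteq> inside (path_image \<gamma>)"
proof
  fix w assume "w \<in> S"
  then have "winding_number \<gamma> w \<noteq> 0"
    using winding_number_eq[OF assms(1,2) _ assms(5,3,4)] assms(6) by simp
  then have "w \<notin> outside (path_image \<gamma>)"
    using winding_number_zero_in_outside[OF assms(1,2)] by blast
  then show "w \<in> inside (path_image \<gamma>)"
    using \<open>w \<in> S\<close> assms(4) inside_Un_outside[of "path_image \<gamma>"] by blast
qed

lemma outside_if_ray_disjoint:
  fixes z d :: complex
  assumes "d \<noteq> 0" "\<And>t. t \<ge> 0 \<Longrightarrow> z + of_real t * d \<notin> S"
  shows "z \<in> outside S"
proof -
  define C where "C = (\<lambda>t. z + of_real t * d) ` {0..}"
  have "z \<in> C" unfolding C_def by (auto intro: image_eqI[of _ _ 0])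
  moreover have "connected C"
    unfolding C_def by (intro connected_continuous_image continuous_intros)
      (auto simp: is_interval_connected is_interval_ci)
  moreover have "C \<subseteq> - S" unfolding C_def using assms(2) by auto
  ultimately have component: "C \<subseteq> connected_component_set (- S) z"
    by (meson connected_component_maximal)
  have "\<not> bounded C"
  proof
    assume "bounded C"
    then obtain B where B: "\<And>x. x \<in> C \<Longrightarrow> cmod x \<le> B" by (meson bounded_iff)
    define t where "t = (B + cmod z + 1) / cmod d"
    have "0 \<le> B + cmod z + 1" using B[OF \<open>z \<in> C\<close>] norm_ge_zero[of z] by linarith
    then have "0 \<le> t" unfolding t_def by simp
    then have "z + of_real t * d \<in> C" unfolding C_def by (intro imageI) simp
    then have "cmod (z + of_real t * d) \<le> B" by (rule B)
    moreover have "t * cmod d \<le> cmod (z + of_real t * d) + cmod z"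
      using norm_triangle_ineq4[of "z + of_real t * d" z] \<open>0 \<le> t\<close> by (simp add: norm_mult)
    moreover have "t * cmod d = B + cmod z + 1" using assms(1) unfolding t_def by simp
    ultimately show False by simp
  qed
  then have "\<not> bounded (connected_component_set (- S) z)"
    using component bounded_subset by blast
  then show ?thesis unfolding outside by simp
qed

lemma has_contour_integral_inverse_sub:
  assumes "valid_path g" "pathstart g = p" "pathfinish g = q" "a \<noteq> 0"
    "path_image g \<inter> {w. a * (w - z) \<in> \<real>\<^sub>\<le>\<^sub>0} = {}"
  shows "((\<lambda>w. 1 / (w - z)) has_contour_integral (Ln (a * (q - z)) - Ln (a * (p - z)))) g"
proof -
  have "((\<lambda>w. Ln (a * (w - z))) has_field_derivative 1 / (w - z)) (at w within S)"
    if "a * (w - z) \<notin> \<real>\<^sub>\<le>\<^sub>0" for w S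
  proof -
    have deriv: "((\<lambda>w. Ln (a * (w - z))) has_field_derivative inverse (a * (w - z)) * a) (at w within S)"
      by (rule DERIV_chain2[where g = "\<lambda>w. a * (w - z)", OF has_field_derivative_Ln[OF that]])
        (auto intro!: derivative_eq_intros)
    have "w \<noteq> z" using that by auto
    then have "inverse (a * (w - z)) * a = 1 / (w - z)"
      using assms(4) by (simp add: divide_simps)
    then show ?thesis using deriv by simp
  qed
  then have "((\<lambda>w. 1 / (w - z)) has_contour_integral
      (Ln (a * (pathfinish g - z)) - Ln (a * (pathstart g - z)))) g"
    by (intro contour_integral_primitive[where f = "\<lambda>w. Ln (a * (w - z))"
          and S = "{w. a * (w - z) \<notin> \<real>\<^sub>\<le>\<^sub>0}"]) (use assms(1,5) in auto)
  then show ?thesis using assms(2,3) by simp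
qed

lemma winding_number_eq_1_if_has_contour_integral:
  assumes "valid_path \<gamma>" "z \<notin> path_image \<gamma>"
    "((\<lambda>w. 1 / (w - z)) has_contour_integral (2 * pi * \<i>)) \<gamma>"
  shows "winding_number \<gamma> z = 1"
  using has_contour_integral_unique[OF has_contour_integral_winding_number[OF assms(1,2)] assms(3)]
  by simp

text \<open>The contour integral of \<open>1/(w + 3\<i>)\<close> is evaluated piecewise with the primitives
  \<open>Ln (w + 3\<i>)\<close> and, on the semicircle, \<open>Ln (\<i> (w + 3\<i>))\<close>, whose branch cuts the pieces avoid.\<close>
lemma winding_number_Cpath: "winding_number Cpath (-3*\<i>) = 1"
proof -
  define arc where "arc = part_circlepath 0 6 pi (2*pi)"
  define rest where "rest = linepath 6 ((1 + \<i>)/3) +++ linepath ((1 + \<i>)/3) (-(1 + \<i>)) +++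
    linepath (-(1 + \<i>)) (-2 + (-1 + \<i>)/3) +++ linepath (-2 + (-1 + \<i>)/3) (-3 + \<i>/3) +++
    linepath (-3 + \<i>/3) u0"
  have Cpath: "Cpath = linepath u0 (-6) +++ arc +++ rest"
    unfolding Cpath_def arc_def rest_def ..
  have rest: "valid_path rest" "pathstart rest = 6" "pathfinish rest = u0"
    unfolding rest_def by simp_all
  have arc: "valid_path arc" "pathstart arc = -6" "pathfinish arc = 6"
    unfolding arc_def
    by (simp_all add: part_circlepath_lower_ends del: pathfinish_part_circlepath pathstart_part_circlepath)
  have "path_image (linepath u0 (-6)) \<inter> {w. 1 * (w - -3*\<i>) \<in> \<real>\<^sub>\<le>\<^sub>0} = {}"
    unfolding u0_def path_image_linepath
    by (intro closed_segment_disjointI) (simp add: complex_nonpos_Reals_iff)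
  note i1 = has_contour_integral_inverse_sub[OF valid_path_linepath pathstart_linepath
      pathfinish_linepath one_neq_zero this]
  have "Im w = -6" if "w \<in> path_image arc" "Re w = 0" for w
    using part_circlepath_lower_half[OF that(1)[unfolded arc_def]] cmod_eq_Im[OF that(2)] by simp
  then have "path_image arc \<inter> {w. \<i> * (w - -3*\<i>) \<in> \<real>\<^sub>\<le>\<^sub>0} = {}"
    by (auto simp: complex_nonpos_Reals_iff)
  note i2 = has_contour_integral_inverse_sub[OF arc complex_i_not_zero this]
  have "path_image rest \<inter> {w. 1 * (w - -3*\<i>) \<in> \<real>\<^sub>\<le>\<^sub>0} = {}"
    unfolding rest_def u0_def
    by (simp add: path_image_join Int_Un_distrib2)
       (auto intro!: closed_segment_disjointI simp: complex_nonpos_Reals_iff)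
  note i3 = has_contour_integral_inverse_sub[OF rest one_neq_zero this]
  have Ln_ii: "Ln (\<i> * (6 - -3*\<i>)) = Ln (1 * (6 - -3*\<i>)) + \<i> * pi/2"
    "Ln (\<i> * (-6 - -3*\<i>)) = Ln (1 * (-6 - -3*\<i>)) - \<i> * (3*pi/2)"
    by (subst Ln_times_ii; simp add: complex_eq_iff)+
  have "((\<lambda>w. 1 / (w - -3*\<i>)) has_contour_integral (2*pi*\<i>)) Cpath"
    using has_contour_integral_join[OF i1 has_contour_integral_join[OF i2 i3]] arc rest
    unfolding Cpath Ln_ii by (simp add: algebra_simps)
  moreover have "-3*\<i> \<notin> path_image Cpath"
    using Cpath_avoids_root_zones unfolding lower_zone_def by auto
  ultimately show ?thesis
    using winding_number_eq_1_if_has_contour_integral Cpath_closed_valid(1) by blast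
qed

text \<open>Primitives \<open>Ln (2 - w)\<close> and, on the right edge, \<open>Ln (w - 2)\<close>.\<close>
lemma winding_number_C0hat: "winding_number C0hat 2 = 1"
proof -
  define Q where "Q = linepath (6 + 6*\<i>) (-6 + 6*\<i>) +++ linepath (-6 + 6*\<i>) (-6) +++ linepath (-6) (-1)"
  have C0hat: "C0hat = linepath (-1) (-1 - 6*\<i>) +++ linepath (-1 - 6*\<i>) (6 - 6*\<i>) +++
      linepath (6 - 6*\<i>) (6 + 6*\<i>) +++ Q"
    unfolding C0hat_def Q_def ..
  have Q: "valid_path Q" "pathstart Q = 6 + 6*\<i>" "pathfinish Q = -1"
    unfolding Q_def by simp_all
  have "path_image (linepath (-1) (-1 - 6*\<i>)) \<inter> {w. -1 * (w - 2) \<in> \<real>\<^sub>\<le>\<^sub>0} = {}"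
    "path_image (linepath (-1 - 6*\<i>) (6 - 6*\<i>)) \<inter> {w. -1 * (w - 2) \<in> \<real>\<^sub>\<le>\<^sub>0} = {}"
    "path_image (linepath (6 - 6*\<i>) (6 + 6*\<i>)) \<inter> {w. 1 * (w - 2) \<in> \<real>\<^sub>\<le>\<^sub>0} = {}"
    unfolding path_image_linepath
    by (intro closed_segment_disjointI; simp add: complex_nonpos_Reals_iff)+
  note i123 = has_contour_integral_inverse_sub[OF valid_path_linepath pathstart_linepath
      pathfinish_linepath neg_one_neq_zero this(1)]
    has_contour_integral_inverse_sub[OF valid_path_linepath pathstart_linepath
      pathfinish_linepath neg_one_neq_zero this(2)]
    has_contour_integral_inverse_sub[OF valid_path_linepath pathstart_linepath
      pathfinish_linepath one_neq_zero this(3)]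
  have "path_image Q \<inter> {w. -1 * (w - 2) \<in> \<real>\<^sub>\<le>\<^sub>0} = {}"
    unfolding Q_def
    by (simp add: path_image_join Int_Un_distrib2)
       (auto intro!: closed_segment_disjointI simp: complex_nonpos_Reals_iff)
  note i4 = has_contour_integral_inverse_sub[OF Q neg_one_neq_zero this]
  have Ln_minus_1: "Ln (-1 * (6 - 6*\<i> - 2)) = Ln (1 * (6 - 6*\<i> - 2)) + \<i> * pi"
    "Ln (-1 * (6 + 6*\<i> - 2)) = Ln (1 * (6 + 6*\<i> - 2)) - \<i> * pi"
    using Ln_minus[of "6 - 6*\<i> - 2"] Ln_minus[of "6 + 6*\<i> - 2"] by (simp_all add: complex_eq_iff)
  have "((\<lambda>w. 1 / (w - 2)) has_contour_integral (2*pi*\<i>)) C0hat"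
    using has_contour_integral_join[OF i123(1) has_contour_integral_join[OF i123(2)
        has_contour_integral_join[OF i123(3) i4]]] Q
    unfolding C0hat Ln_minus_1 by (simp add: algebra_simps)
  moreover have "2 \<notin> path_image C0hat"
    using C0hat_avoids_zones unfolding C0hat_zone_def by auto
  ultimately show ?thesis
    using winding_number_eq_1_if_has_contour_integral C0hat_closed_valid(1) by blast
qed

lemma lower_zone_inside_Cpath: "lower_zone \<subseteq> inside (path_image Cpath)"
  using Cpath_closed_valid(2,3) connected_lower_zone Cpath_avoids_root_zones winding_number_Cpath
  by (intro subset_inside_if_winding_number_nonzero[where z = "-3*\<i>"]) (auto simp: lower_zone_def)

lemma C0hat_zone_inside_C0hat: "C0hat_zone \<subseteq> inside (path_image C0hat)"
  using C0hat_closed_valid(2,3) connected_C0hat_zone C0hat_avoids_zones winding_number_C0hat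
  by (intro subset_inside_if_winding_number_nonzero[where z = 2]) (auto simp: C0hat_zone_def)

section \<open>The branch of \<open>R\<close> and the integral \<open>J\<close>\<close>

lemma Pcub_nonzero_on_Cpath:
  assumes "Im s > 0" "cmod s < 50/3" "w \<in> path_image Cpath"
  shows "Pcub s w \<noteq> 0"
proof
  assume root: "Pcub s w = 0"
  then have "w \<in> upper_cone \<union> lower_zone"
    using Pcub_root_not_real[OF root assms(1)] Pcub_upper_root_in_upper_cone[OF root assms(1)]
      Pcub_lower_root_in_lower_zone[OF root assms(1,2)] by (cases "Im w > 0") auto
  then show False using Cpath_avoids_root_zones assms(3) by blast
qed

lemma is_branch_exists:
  assumes "Im s > 0" "cmod s < 50/3"
  shows "\<exists>\<rho>. is_branch s \<rho>"
proof -
  have "continuous_on {0..1} (\<lambda>t. Pcub s (Cpath t))"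
    using Cpath_closed_valid(2) unfolding Pcub_def path_def by (intro continuous_intros) auto
  moreover have "Pcub s (Cpath t) \<noteq> 0" if "t \<in> {0..1}" for t
    using Pcub_nonzero_on_Cpath[OF assms] that unfolding path_image_def by blast
  ultimately obtain \<rho> where "continuous_on {0..1} \<rho>" "\<And>t. t \<in> {0..1} \<Longrightarrow> Pcub s (Cpath t) = (\<rho> t)^2"
    using continuous_sqrt_on_contractible[OF _ convex_imp_contractible[OF convex_real_interval(5)]]
    by metis
  then show ?thesis unfolding is_branch_def by auto
qed

lemma norm_Cpath_le: "t \<in> {0..1} \<Longrightarrow> cmod (Cpath t) \<le> 6"
proof -
  assume "t \<in> {0..1}"
  then have w: "Cpath t \<in> path_image Cpath" unfolding path_image_def by blast
  have seg: "closed_segment a b \<subseteq> cball 0 6"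
    if "\<bar>Re a\<bar> + \<bar>Im a\<bar> \<le> 6" "\<bar>Re b\<bar> + \<bar>Im b\<bar> \<le> 6" for a b
    using cmod_le[of a] cmod_le[of b] that by (intro closed_segment_subset convex_cball) auto
  have "path_image Cpath \<subseteq> cball 0 6"
    unfolding path_image_Cpath using part_circlepath_lower_half(1)[of _ 6]
    by (intro Un_least seg) (auto simp: u0_def)
  then show ?thesis using w by auto
qed

lemma norm_branch_le:
  assumes "cmod s \<le> 13" "is_branch s \<rho>" "t \<in> {0..1}"
  shows "cmod (\<rho> t) \<le> 11"
proof -
  define u where "u = Cpath t"
  have u: "cmod u \<le> 6" unfolding u_def by (rule norm_Cpath_le[OF assms(3)])
  have "cmod (Pcub s u) \<le> cmod (u^3/3) + cmod (u^2) + cmod s" unfolding Pcub_def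
    by (rule order_trans[OF norm_triangle_ineq add_right_mono[OF norm_triangle_ineq]])
  also have "\<dots> = (cmod u)^3/3 + (cmod u)^2 + cmod s" by (simp add: norm_power norm_divide)
  also have "\<dots> \<le> 6^3/3 + 6^2 + 13"
    using u assms(1) by (intro add_mono divide_right_mono power_mono) auto
  finally have "cmod (Pcub s u) \<le> 11^2" by simp
  moreover have "Pcub s u = (\<rho> t)^2" using assms(2,3) unfolding is_branch_def u_def by simp
  ultimately have "(cmod (\<rho> t))^2 \<le> 11^2" by (simp add: norm_power)
  then show ?thesis by (rule power2_le_imp_le) simp
qed

text \<open>Unlike \<open>valid_path\<close>, this gives an explicit bound on \<open>vector_derivative\<close>, and it is
  preserved by \<open>+++\<close>.\<close>
definition bounded_speed :: "(real \<Rightarrow> 'a::real_normed_vector) \<Rightarrow> real \<Rightarrow> bool" where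
  "bounded_speed g B \<longleftrightarrow>
     (\<exists>K. finite K \<and> (\<forall>x\<in>{0<..<1} - K. \<exists>D. (g has_vector_derivative D) (at x) \<and> norm D \<le> B))"

lemma bounded_speed_mono: "bounded_speed g B \<Longrightarrow> B \<le> B' \<Longrightarrow> bounded_speed g B'"
  unfolding bounded_speed_def by (meson order_trans)

lemma bounded_speed_linepath: "bounded_speed (linepath a b) (norm (b - a))"
  unfolding bounded_speed_def
  by (rule exI[of _ "{}"]) (auto intro!: exI[of _ "b - a"] has_vector_derivative_linepath_within)

lemma bounded_speed_part_circlepath: "bounded_speed (part_circlepath z r s t) (\<bar>r\<bar> * \<bar>t - s\<bar>)"
  unfolding bounded_speed_def
proof (rule exI[of _ "{}"], intro conjI ballI)
  fix x :: real
  show "\<exists>D. (part_circlepath z r s t has_vector_derivative D) (at x) \<and> cmod D \<le> \<bar>r\<bar> * \<bar>t - s\<bar>"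
    by (rule exI, rule conjI, rule has_vector_derivative_part_circlepath)
       (simp add: norm_mult flip: of_real_diff)
qed simp

lemma has_vector_derivative_joinpaths1:
  assumes "(g1 has_vector_derivative D) (at (2 * x))" "x < 1/2"
  shows "((g1 +++ g2) has_vector_derivative 2 *\<^sub>R D) (at x)"
proof -
  have "((g1 \<circ> (\<lambda>x. 2 * x)) has_vector_derivative 2 *\<^sub>R D) (at x)"
    using assms(1) by (intro vector_diff_chain_at) (auto intro!: derivative_eq_intros)
  then show ?thesis
    by (rule has_vector_derivative_transform_within_open[of _ _ _ "{..<1/2}"])
       (use assms(2) in \<open>auto simp: joinpaths_def\<close>)
qed

lemma has_vector_derivative_joinpaths2:
  assumes "(g2 has_vector_derivative D) (at (2 * x - 1))" "x > 1/2"
  shows "((g1 +++ g2) has_vector_derivative 2 *\<^sub>R D) (at x)"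
proof -
  have "((g2 \<circ> (\<lambda>x. 2 * x - 1)) has_vector_derivative 2 *\<^sub>R D) (at x)"
    using assms(1) by (intro vector_diff_chain_at) (auto intro!: derivative_eq_intros)
  then show ?thesis
    by (rule has_vector_derivative_transform_within_open[of _ _ _ "{1/2<..}"])
       (use assms(2) in \<open>auto simp: joinpaths_def\<close>)
qed

lemma bounded_speed_join:
  assumes "bounded_speed g1 B1" "bounded_speed g2 B2"
  shows "bounded_speed (g1 +++ g2) (2 * max B1 B2)"
proof -
  obtain K1 where K1: "finite K1"
    "\<And>x. x \<in> {0<..<1} - K1 \<Longrightarrow> \<exists>D. (g1 has_vector_derivative D) (at x) \<and> norm D \<le> B1"
    using assms(1) unfolding bounded_speed_def by blast
  obtain K2 where K2: "finite K2"
    "\<And>x. x \<in> {0<..<1} - K2 \<Longrightarrow> \<exists>D. (g2 has_vector_derivative D) (at x) \<and> norm D \<le> B2"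
    using assms(2) unfolding bounded_speed_def by blast
  define K where "K = {1/2} \<union> (\<lambda>x. x/2) ` K1 \<union> (\<lambda>x. (x + 1)/2) ` K2"
  have "\<exists>D. ((g1 +++ g2) has_vector_derivative D) (at x) \<and> norm D \<le> 2 * max B1 B2"
    if "0 < x" "x < 1" "x \<notin> K" for x
  proof (cases "x < 1/2")
    case True
    have "2 * x \<notin> K1"
      using \<open>x \<notin> K\<close> image_eqI[of x "\<lambda>x. x/2" "2 * x" K1] unfolding K_def by auto
    then obtain D where D: "(g1 has_vector_derivative D) (at (2 * x))" "norm D \<le> B1"
      using K1(2)[of "2 * x"] \<open>0 < x\<close> True by auto
    have "norm (2 *\<^sub>R D) \<le> 2 * max B1 B2" using D(2) by simp
    then show ?thesis using has_vector_derivative_joinpaths1[OF D(1) True] by blast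
  next
    case False
    then have "x > 1/2" using \<open>x \<notin> K\<close> unfolding K_def by auto
    have "2 * x - 1 \<notin> K2"
      using \<open>x \<notin> K\<close> image_eqI[of x "\<lambda>x. (x + 1)/2" "2 * x - 1" K2] unfolding K_def by auto
    then obtain D where D: "(g2 has_vector_derivative D) (at (2 * x - 1))" "norm D \<le> B2"
      using K2(2)[of "2 * x - 1"] \<open>x < 1\<close> \<open>x > 1/2\<close> by auto
    have "norm (2 *\<^sub>R D) \<le> 2 * max B1 B2" using D(2) by simp
    then show ?thesis using has_vector_derivative_joinpaths2[OF D(1) \<open>x > 1/2\<close>] by blast
  qed
  moreover have "finite K" unfolding K_def using K1(1) K2(1) by simp
  ultimately show ?thesis unfolding bounded_speed_def by (intro exI[of _ K]) auto
qed

lemma bounded_speed_Cpath: "\<exists>B \<ge> 0. bounded_speed Cpath B"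
proof -
  have "\<exists>B. bounded_speed Cpath B"
    unfolding Cpath_def
    by (rule exI, (rule bounded_speed_join bounded_speed_linepath bounded_speed_part_circlepath)+)
  then obtain B where B: "bounded_speed Cpath B" ..
  show ?thesis
  proof (intro exI conjI)
    show "0 \<le> max B 0" by simp
    show "bounded_speed Cpath (max B 0)" using B by (rule bounded_speed_mono) simp
  qed
qed

lemma norm_integral_bounded_speed_le:
  fixes \<rho> g :: "real \<Rightarrow> complex"
  assumes "bounded_speed g B" "0 \<le> B" "0 \<le> A" "\<And>\<tau>. \<tau> \<in> {0..t} \<Longrightarrow> norm (\<rho> \<tau>) \<le> A" "t \<in> {0..1}"
  shows "norm (integral {0..t} (\<lambda>\<tau>. \<rho> \<tau> * vector_derivative g (at \<tau> within {0..1}))) \<le> A * B"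
proof (cases "(\<lambda>\<tau>. \<rho> \<tau> * vector_derivative g (at \<tau> within {0..1})) integrable_on {0..t}")
  case True
  obtain K where K: "finite K"
    "\<And>x. x \<in> {0<..<1} - K \<Longrightarrow> \<exists>D. (g has_vector_derivative D) (at x) \<and> norm D \<le> B"
    using assms(1) unfolding bounded_speed_def by blast
  have "norm (\<rho> x * vector_derivative g (at x within {0..1})) \<le> A * B"
    if x: "x \<in> {0..t} - (K \<union> {0, 1})" for x
  proof -
    obtain D where D: "(g has_vector_derivative D) (at x)" "norm D \<le> B"
      using K(2)[of x] x assms(5) by auto
    have "at x within {0..1} = at x" using x assms(5) by (intro at_within_interior) auto
    then have "vector_derivative g (at x within {0..1}) = D" using D(1) by (simp add: vector_derivative_at)
    moreover have "norm (\<rho> x) \<le> A" using assms(4) x by blast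
    ultimately have "norm (\<rho> x) * norm (vector_derivative g (at x within {0..1})) \<le> A * B"
      using D(2) assms(3) by (intro mult_mono) auto
    then show ?thesis by (simp add: norm_mult)
  qed
  then have "norm (integral {0..t} (\<lambda>\<tau>. \<rho> \<tau> * vector_derivative g (at \<tau> within {0..1})))
      \<le> A * B * measure lborel {0..t}"
    using K(1) assms(2,3) True
    by (intro has_integral_bound_real[where S = "K \<union> {0, 1}"]) (auto simp: has_integral_integral)
  also have "\<dots> = A * B * t" using assms(5) by simp
  also have "\<dots> \<le> A * B" using assms(2,3,5) by (intro mult_left_le) auto
  finally show ?thesis .
next
  case False
  then show ?thesis using assms(2,3) by (simp add: not_integrable_integral)
qed

lemma DplusD: "s \<in> Dplus (21/4) \<Longrightarrow> Im s > 0 \<and> cmod s < 50/3"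
  unfolding Dplus_def by auto

lemma roots_in_half_discs:
  assumes "s \<in> Dplus (21/4)"
  shows "r3 s \<in> Dminus 5" "r1 s \<in> Dminus 5" "r2 s \<in> Dplus 5"
proof -
  have s: "Im s > 0" "cmod s < 50/3" using DplusD[OF assms] by auto
  show "r3 s \<in> Dminus 5" "r1 s \<in> Dminus 5" "r2 s \<in> Dplus 5"
    using r1_spec[OF s(1)] r2_spec[OF s(1)] r3_spec[OF s(1)] norm_Pcub_root_less[OF _ s(2)]
    unfolding Dminus_def Dplus_def by auto
qed

lemma roots_C0hat:
  assumes "s \<in> Dplus (21/4)"
  shows "r2 s \<in> inside (path_image C0hat)" "r3 s \<in> inside (path_image C0hat)"
    "r1 s \<in> outside (path_image C0hat)"
proof -
  have s: "Im s > 0" "cmod s < 50/3" using DplusD[OF assms] by auto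
  have box: "\<bar>Re u\<bar> < 5" "\<bar>Im u\<bar> < 5" if "Pcub s u = 0" for u
    using abs_Re_le_cmod[of u] abs_Im_le_cmod[of u] norm_Pcub_root_less[OF that s(2)] by linarith+
  have "r2 s \<in> C0hat_zone" "r3 s \<in> C0hat_zone"
    using r2_spec[OF s(1)] r3_spec[OF s(1)] box unfolding C0hat_zone_def by force+
  then show "r2 s \<in> inside (path_image C0hat)" "r3 s \<in> inside (path_image C0hat)"
    using C0hat_zone_inside_C0hat by auto
  have "r1 s - of_real t * \<i> \<in> lower_left_strip" if "t \<ge> 0" for t
    using r1_spec[OF s(1)] box[of "r1 s"] that unfolding lower_left_strip_def by auto
  then show "r1 s \<in> outside (path_image C0hat)"
    using C0hat_avoids_zones by (intro outside_if_ray_disjoint[of "-\<i>"]) auto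
qed

lemma roots_Cpath:
  assumes "s \<in> Dplus (21/4)"
  shows "r1 s \<in> inside (path_image Cpath)" "r3 s \<in> inside (path_image Cpath)"
    "r2 s \<in> outside (path_image Cpath)"
proof -
  have s: "Im s > 0" "cmod s < 50/3" using DplusD[OF assms] by auto
  show "r1 s \<in> inside (path_image Cpath)" "r3 s \<in> inside (path_image Cpath)"
    using r1_spec[OF s(1)] r3_spec[OF s(1)] Pcub_lower_root_in_lower_zone[OF _ s] lower_zone_inside_Cpath
    by auto
  have "r2 s \<in> upper_cone"
    using r2_spec[OF s(1)] Pcub_upper_root_in_upper_cone[OF _ s(1)] by auto
  then have "r2 s + of_real t * \<i> \<in> upper_cone" if "t \<ge> 0" for t
    using that unfolding upper_cone_def by auto
  then show "r2 s \<in> outside (path_image Cpath)"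
    using Cpath_avoids_root_zones by (intro outside_if_ray_disjoint[of "\<i>"]) auto
qed

lemma Jint_bounded:
  "\<exists>\<alpha>::real. \<forall>s\<in>Dplus (21/4). \<forall>\<rho>. is_branch s \<rho> \<longrightarrow> (\<forall>t\<in>{0..1}. cmod (Jint \<rho> t) \<le> \<alpha>)"
proof -
  obtain B where B: "0 \<le> B" "bounded_speed Cpath B" using bounded_speed_Cpath by blast
  have "cmod (Jint \<rho> t) \<le> 11 * B"
    if "s \<in> Dplus (21/4)" "is_branch s \<rho>" "t \<in> {0..1}" for s \<rho> t
  proof -
    have "cmod s \<le> 13" using that(1) unfolding Dplus_def by auto
    then have "cmod (\<rho> \<tau>) \<le> 11" if "\<tau> \<in> {0..t}" for \<tau>
      using norm_branch_le \<open>is_branch s \<rho>\<close> that \<open>t \<in> {0..1}\<close> by auto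
    then show ?thesis
      unfolding Jint_def using B \<open>t \<in> {0..1}\<close> by (intro norm_integral_bounded_speed_le) auto
  qed
  then show ?thesis by blast
qed

theorem corollary1:
  shows "(\<forall>s\<in>Dplus (21/4). r3 s \<in> Dminus 5 \<and> r1 s \<in> Dminus 5 \<and> r2 s \<in> Dplus 5)
    \<and> (\<forall>s\<in>Dplus (21/4). r2 s \<in> inside (path_image C0hat) \<and> r3 s \<in> inside (path_image C0hat)
          \<and> r1 s \<in> outside (path_image C0hat))
    \<and> (\<forall>s\<in>Dplus (21/4). r1 s \<in> inside (path_image Cpath) \<and> r3 s \<in> inside (path_image Cpath)
          \<and> r2 s \<in> outside (path_image Cpath))
    \<and> (\<forall>s\<in>Dplus (21/4). \<exists>\<rho>. is_branch s \<rho>)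
    \<and> (\<exists>\<alpha>::real. \<forall>s\<in>Dplus (21/4). \<forall>\<rho>. is_branch s \<rho> \<longrightarrow>
          (\<forall>t\<in>{0..1}. cmod (Jint \<rho> t) \<le> \<alpha>))"
proof (intro conjI ballI)
  fix s assume s: "s \<in> Dplus (21/4)"
  show "r3 s \<in> Dminus 5" "r1 s \<in> Dminus 5" "r2 s \<in> Dplus 5"
    by (fact roots_in_half_discs[OF s])+
  show "r2 s \<in> inside (path_image C0hat)" "r3 s \<in> inside (path_image C0hat)"
    "r1 s \<in> outside (path_image C0hat)"
    by (fact roots_C0hat[OF s])+
  show "r1 s \<in> inside (path_image Cpath)" "r3 s \<in> inside (path_image Cpath)"
    "r2 s \<in> outside (path_image Cpath)"
    by (fact roots_Cpath[OF s])+
  show "\<exists>\<rho>. is_branch s \<rho>"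
    using DplusD[OF s] by (intro is_branch_exists) auto
qed (fact Jint_bounded)

end
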